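(* Let $\alpha\in(0,1)$ and for $\rho\ge0$ and real $\chi\notin\pi\mathbb{Z}$ let $$I_\alpha(\rho,\chi)=\int_{-\infty}^{+\infty}dy\,e^{i\rho\cosh y}\,\frac{e^{-y\alpha}}{1-e^{-2y-2i\chi}} .$$ Then there is a constant $C$ such that $|I_\alpha(\rho,\chi)|\le C$, and for every $0\le\epsilon<\min(\alpha,1-\alpha)$ there is a constant $C(\epsilon)$ such that $$|I_\alpha(\rho,\chi)-I_\alpha(0,\chi)|\le C(\epsilon)\,\rho^{\epsilon},$$ both estimates holding uniformly in $\rho$ and $\chi$. *)

theory Defs
  imports "HOL-Analysis.Analysis"
begin

definition I_alpha :: "real \<Rightarrow> real \<Rightarrow> real \<Rightarrow> complex" where
  "I_alpha a rho chi =
     (LINT y|lborel. exp (\<i> * complex_of_real (rho * cosh y)) * complex_of_real (exp (- y * a))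
        / (1 - exp (complex_of_real (-2 * y) - 2 * \<i> * complex_of_real chi)))"

end

theory Submission
  imports Defs "HOL-Probability.Sinc_Integral" "HOL-Probability.Characteristic_Functions"
begin

text \<open>With z = exp(-2 i chi), a point of the unit circle other than 1, and
  f(y) = exp(-a y) / (1 - exp(-2 y) z), both I_alpha(rho, chi) and I_alpha(rho, chi) - I_alpha(0, chi)
  are integrals of k f for an even factor k, namely exp(i rho cosh y) and exp(i rho cosh y) - 1,
  bounded by M exp(eps |y|) with M = 1, eps = 0, resp. M = 2 rho^eps (as |exp(i x) - 1| <= min 2 x).
  For even k, f may be replaced by (f(y) + f(-y)) / 2. Each of f(y), f(-y) blows up like
  1 / |1 - z| as z tends to 1, but with d = |1 - z| their sum is bounded by a multiple of
  1 + d / (y^2 + d^2) on [-1, 1] and by 4 exp(-a |y|) outside, and the Poisson kernel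
  d / (y^2 + d^2) has integral at most pi whatever d is. Hence |integral k f| <= M C(a, eps)
  uniformly in chi, as long as eps < a.\<close>

definition I_alpha_kernel :: "real \<Rightarrow> complex \<Rightarrow> real \<Rightarrow> complex" where
  "I_alpha_kernel a z y = complex_of_real (exp (- y * a)) / (1 - complex_of_real (exp (-2 * y)) * z)"

lemma I_alpha_eq_kernel:
  "I_alpha a rho chi = (LINT y|lborel. exp (\<i> * complex_of_real (rho * cosh y))
     * I_alpha_kernel a (exp (- (2 * \<i> * complex_of_real chi))) y)"
proof -
  have "exp (complex_of_real (-2 * y) - 2 * \<i> * complex_of_real chi)
      = complex_of_real (exp (-2 * y)) * exp (- (2 * \<i> * complex_of_real chi))" for y
    by (simp only: diff_conv_add_uminus exp_add exp_of_real)
  then show ?thesis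
    unfolding I_alpha_def I_alpha_kernel_def by (simp only: times_divide_eq_right)
qed

lemma exp_chi_on_unit_circle:
  assumes "\<forall>k::int. chi \<noteq> pi * of_int k"
  shows "cmod (exp (- (2 * \<i> * complex_of_real chi))) = 1"
    and "exp (- (2 * \<i> * complex_of_real chi)) \<noteq> 1"
proof -
  show "cmod (exp (- (2 * \<i> * complex_of_real chi))) = 1" by simp
  show "exp (- (2 * \<i> * complex_of_real chi)) \<noteq> 1"
  proof
    assume "exp (- (2 * \<i> * complex_of_real chi)) = 1"
    then obtain n :: int where "Im (- (2 * \<i> * complex_of_real chi)) = of_int (2 * n) * pi"
      unfolding exp_eq_1 by blast
    then have "chi = pi * of_int (- n)" by simp
    with assms show False by blast
  qed
qed

lemma norm_one_minus_real_mult_unit_sq: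
  fixes z :: complex
  assumes "cmod z = 1"
  shows "(cmod (1 - of_real u * z))\<^sup>2 = (1 - u)\<^sup>2 + u * (cmod (1 - z))\<^sup>2"
proof -
  obtain x y where z: "z = Complex x y" by (cases z)
  have yy: "y * y = 1 - x * x" using assms by (simp add: z cmod_def power2_eq_square)
  have parts: "1 - of_real u * z = Complex (1 - u * x) (- (u * y))" "1 - z = Complex (1 - x) (- y)"
    by (simp_all add: z complex_eq_iff)
  show ?thesis
    unfolding parts cmod_power2 by (simp add: power2_eq_square algebra_simps yy)
qed

lemma norm_real_minus_unit:
  fixes z :: complex
  assumes "cmod z = 1"
  shows "cmod (of_real u - z) = cmod (1 - of_real u * z)"
proof -
  obtain x y where z: "z = Complex x y" by (cases z)
  have yy: "y * y = 1 - x * x" using assms by (simp add: z cmod_def power2_eq_square)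
  have parts: "1 - of_real u * z = Complex (1 - u * x) (- (u * y))" "of_real u - z = Complex (u - x) (- y)"
    by (simp_all add: z complex_eq_iff)
  have "(cmod (of_real u - z))\<^sup>2 = (cmod (1 - of_real u * z))\<^sup>2"
    unfolding parts cmod_power2 by (simp add: power2_eq_square algebra_simps yy)
  then show ?thesis by simp
qed

lemma norm_one_minus_real_mult_unit_ge:
  fixes z :: complex
  assumes z: "cmod z = 1" and u: "0 < u"
  shows "sqrt (min (1/4) ((cmod (1 - z))\<^sup>2 / 2)) * max 1 u \<le> cmod (1 - of_real u * z)"
proof -
  define d where "d = cmod (1 - z)"
  define m where "m = max 1 u"
  have "min (1/4) (d\<^sup>2 / 2) * m\<^sup>2 \<le> (1 - u)\<^sup>2 + u * d\<^sup>2"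
  proof (cases "u \<le> 1/2 \<or> 2 \<le> u")
    case True
    then have "m \<le> 2 * \<bar>1 - u\<bar>" by (auto simp: m_def)
    then have "m\<^sup>2 \<le> (2 * \<bar>1 - u\<bar>)\<^sup>2" by (intro power_mono) (auto simp: m_def)
    then have "m\<^sup>2 \<le> 4 * (1 - u)\<^sup>2" by (simp add: power_mult_distrib)
    moreover have "min (1/4) (d\<^sup>2 / 2) * m\<^sup>2 \<le> (1/4) * m\<^sup>2"
      by (intro mult_right_mono) auto
    moreover have "0 \<le> u * d\<^sup>2" using u by simp
    ultimately show ?thesis by linarith
  next
    case False
    then have "m\<^sup>2 \<le> 2 * u" by (auto simp: m_def max_def power2_eq_square)
    have "min (1/4) (d\<^sup>2 / 2) * m\<^sup>2 \<le> (d\<^sup>2 / 2) * m\<^sup>2"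
      by (intro mult_right_mono) auto
    also have "\<dots> \<le> (d\<^sup>2 / 2) * (2 * u)"
      using \<open>m\<^sup>2 \<le> 2 * u\<close> by (intro mult_left_mono) auto
    finally have "min (1/4) (d\<^sup>2 / 2) * m\<^sup>2 \<le> u * d\<^sup>2" by (simp add: mult.commute)
    then show ?thesis using zero_le_power2[of "1 - u"] by linarith
  qed
  then have "sqrt (min (1/4) (d\<^sup>2 / 2) * m\<^sup>2) \<le> sqrt ((cmod (1 - of_real u * z))\<^sup>2)"
    using norm_one_minus_real_mult_unit_sq[OF z, of u] by (simp add: d_def)
  moreover have "sqrt (min (1/4) (d\<^sup>2 / 2) * m\<^sup>2) = sqrt (min (1/4) (d\<^sup>2 / 2)) * m"
    by (simp add: real_sqrt_mult m_def)
  ultimately show ?thesis by (simp add: d_def m_def)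
qed

lemma abs_one_minus_le_norm_one_minus_real_mult_unit:
  fixes z :: complex
  assumes "cmod z = 1" "0 \<le> v"
  shows "\<bar>1 - v\<bar> \<le> cmod (1 - of_real v * z)"
  using norm_triangle_ineq3[of 1 "of_real v * z"] assms by (simp add: norm_mult)

lemma norm_I_alpha_kernel_le:
  assumes z: "cmod z = 1" and a: "a \<le> 1"
  shows "cmod (I_alpha_kernel a z y) * sqrt (min (1/4) ((cmod (1 - z))\<^sup>2 / 2)) \<le> exp (- a * \<bar>y\<bar>)"
proof -
  define u where "u = exp (-2 * y)"
  define m where "m = sqrt (min (1/4) ((cmod (1 - z))\<^sup>2 / 2))"
  define f where "f = cmod (I_alpha_kernel a z y)"
  have u: "0 < u" by (simp add: u_def)
  have "m * max 1 u \<le> cmod (1 - of_real u * z)"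
    using norm_one_minus_real_mult_unit_ge[OF z u] by (simp add: m_def)
  then have "f * (m * max 1 u) \<le> f * cmod (1 - of_real u * z)"
    by (rule mult_left_mono) (simp add: f_def)
  also have "\<dots> \<le> exp (- y * a)"
    by (cases "1 - of_real u * z = 0") (simp_all add: f_def I_alpha_kernel_def u_def norm_divide)
  also have "\<dots> \<le> exp (- a * \<bar>y\<bar>) * max 1 u"
  proof (cases "0 \<le> y")
    case True
    then show ?thesis by (simp add: mult.commute)
  next
    case False
    then have "\<bar>y\<bar> = - y" by simp
    moreover have "(1 - a) * y \<le> 0" using a False by (intro mult_nonneg_nonpos) auto
    ultimately have "- y * a \<le> - a * \<bar>y\<bar> + -2 * y" by (simp add: algebra_simps)
    then have "exp (- y * a) \<le> exp (- a * \<bar>y\<bar>) * u" by (simp add: u_def mult_exp_exp)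
    also have "\<dots> \<le> exp (- a * \<bar>y\<bar>) * max 1 u" by simp
    finally show ?thesis .
  qed
  finally have "(f * m) * max 1 u \<le> exp (- a * \<bar>y\<bar>) * max 1 u" by (simp add: mult.assoc)
  then have "f * m \<le> exp (- a * \<bar>y\<bar>)" by (rule mult_right_le_imp_le) simp
  then show ?thesis by (simp add: f_def m_def)
qed

lemma integrable_exp_neg_abs:
  fixes c :: real
  assumes "0 < c"
  shows "integrable lborel (\<lambda>x::real. exp (- c * \<bar>x\<bar>))"
proof -
  define h where "h = (\<lambda>x::real. indicator {0<..} x * exp (- (x * c)))"
  have h: "integrable lborel h"
    using integrable_I0i_exp_mscale[OF assms] by (simp add: h_def set_integrable_def)
  have "integrable lborel (\<lambda>x. h (0 + (-1) * x))"
    by (rule lborel_integrable_real_affine[OF h]) simp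
  with h have sum: "integrable lborel (\<lambda>x. h x + h (- x))" by simp
  have "AE x in lborel. h x + h (- x) = exp (- c * \<bar>x\<bar>)"
    using AE_lborel_singleton[of 0] by eventually_elim (auto simp: h_def indicator_def abs_if)
  from integrable_cong_AE_imp[OF sum _ this] show ?thesis by simp
qed

lemma integrable_mult_I_alpha_kernel:
  assumes a: "a \<le> 1" and eps: "eps < a" and z: "cmod z = 1" "z \<noteq> 1"
    and k_meas: "k \<in> borel_measurable borel" and k_bound: "\<And>y. cmod (k y) \<le> M * exp (eps * \<bar>y\<bar>)"
  shows "integrable lborel (\<lambda>y. k y * I_alpha_kernel a z y)"
proof (rule Bochner_Integration.integrable_bound)
  define m where "m = sqrt (min (1/4) ((cmod (1 - z))\<^sup>2 / 2))"
  have m: "0 < m" using z by (simp add: m_def)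
  have "cmod (k 0) \<le> M" using k_bound[of 0] by simp
  then have M: "0 \<le> M" using norm_ge_zero[of "k 0"] by linarith
  show "integrable lborel (\<lambda>y. (M / m) * exp (- (a - eps) * \<bar>y\<bar>))"
    using eps by (intro integrable_mult_right integrable_exp_neg_abs) simp
  show "(\<lambda>y. k y * I_alpha_kernel a z y) \<in> borel_measurable lborel"
    using k_meas unfolding I_alpha_kernel_def by measurable
  show "AE y in lborel. norm (k y * I_alpha_kernel a z y) \<le> norm ((M / m) * exp (- (a - eps) * \<bar>y\<bar>))"
  proof (rule AE_I2)
    fix y
    have "cmod (I_alpha_kernel a z y) \<le> exp (- a * \<bar>y\<bar>) / m"
      using norm_I_alpha_kernel_le[OF z(1) a, of y] m by (simp add: m_def le_divide_eq)
    then have "cmod (k y) * cmod (I_alpha_kernel a z y) \<le> (M * exp (eps * \<bar>y\<bar>)) * (exp (- a * \<bar>y\<bar>) / m)"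
      using k_bound[of y] M m by (intro mult_mono) auto
    also have "\<dots> = (M / m) * (exp (eps * \<bar>y\<bar>) * exp (- a * \<bar>y\<bar>))" by simp
    also have "exp (eps * \<bar>y\<bar>) * exp (- a * \<bar>y\<bar>) = exp (- (a - eps) * \<bar>y\<bar>)"
      by (simp add: mult_exp_exp algebra_simps)
    finally show "norm (k y * I_alpha_kernel a z y) \<le> norm ((M / m) * exp (- (a - eps) * \<bar>y\<bar>))"
      using M m by (simp add: norm_mult)
  qed
qed

lemma norm_inverse_add_reflected_le:
  fixes z :: complex
  assumes z: "cmod z = 1" "z \<noteq> 1" and u: "0 < u" "u \<le> 1"
  shows "cmod (1 / (1 - of_real u * z) + of_real u / (of_real u - z))
    \<le> 1 + 2 * cmod (1 - z) / ((1 - u)\<^sup>2 + u * (cmod (1 - z))\<^sup>2)"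
proof -
  define d where "d = cmod (1 - z)"
  define A where "A = 1 - of_real u * z"
  define B where "B = of_real u - z"
  define D where "D = (1 - u)\<^sup>2 + u * d\<^sup>2"
  have d: "0 < d" using z by (simp add: d_def)
  have D: "0 < D" using u d by (simp add: D_def add_nonneg_pos)
  have A_sq: "(cmod A)\<^sup>2 = D"
    using norm_one_minus_real_mult_unit_sq[OF z(1)] by (simp add: A_def D_def d_def)
  have B_A: "cmod B = cmod A" using norm_real_minus_unit[OF z(1)] by (simp add: A_def B_def)
  have A0: "A \<noteq> 0" and B0: "B \<noteq> 0" using A_sq B_A D by auto
  have "cmod (A * B) = D" using A_sq B_A by (simp add: norm_mult power2_eq_square)
  moreover have "1 / A + of_real u / B = (B + of_real u * A) / (A * B)"
    using A0 B0 by (simp add: field_simps)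
  \<comment> \<open>Unlike 1/A and u/B separately, the numerator is small when u and z are both near 1.\<close>
  moreover have "B + of_real u * A = of_real (1 + u\<^sup>2) * (1 - z) - of_real ((1 - u)\<^sup>2)"
    by (simp add: A_def B_def algebra_simps power2_eq_square)
  moreover have "cmod (of_real (1 + u\<^sup>2) * (1 - z) - of_real ((1 - u)\<^sup>2)) \<le> (1 + u\<^sup>2) * d + (1 - u)\<^sup>2"
    by (rule order_trans[OF norm_triangle_ineq4]) (simp only: norm_mult norm_of_real, simp add: d_def)
  moreover have "(1 + u\<^sup>2) * d + (1 - u)\<^sup>2 \<le> D + 2 * d"
  proof -
    have "(1 + u\<^sup>2) * d \<le> 2 * d" using u d by (intro mult_right_mono) (auto simp: power_le_one)
    moreover have "0 \<le> u * d\<^sup>2" using u by simp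
    ultimately show ?thesis by (simp add: D_def)
  qed
  ultimately have "cmod (1 / A + of_real u / B) \<le> (D + 2 * d) / D"
    using D by (simp add: norm_divide divide_right_mono)
  also have "\<dots> = 1 + 2 * d / D" using D by (simp add: field_simps)
  finally show ?thesis by (simp add: A_def B_def D_def d_def)
qed

lemma norm_one_minus_exp_mult_unit_sq_ge:
  fixes z :: complex
  assumes z: "cmod z = 1" and y: "0 \<le> y" "y \<le> 1"
  shows "exp (-2) * (y\<^sup>2 + (cmod (1 - z))\<^sup>2) \<le> (cmod (1 - of_real (exp (-2 * y)) * z))\<^sup>2"
proof -
  define u where "u = exp (-2 * y)"
  have u: "0 < u" "exp (-2) \<le> u" using y by (simp_all add: u_def)
  have "u * (1 + 2 * y) \<le> u * exp (2 * y)" using u by (intro mult_left_mono exp_ge_add_one_self) auto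
  also have "\<dots> = 1" by (simp add: u_def mult_exp_exp)
  finally have "2 * y \<le> (1 - u) * (1 + 2 * y)" by (simp add: algebra_simps)
  also have "\<dots> \<le> (1 - u) * 3" using y by (intro mult_left_mono) (auto simp: u_def)
  finally have y_le: "(2 * y / 3)\<^sup>2 \<le> (1 - u)\<^sup>2" using y by (intro power_mono) auto
  have "3 \<le> exp (2 :: real)" using exp_ge_add_one_self[of 2] by simp
  then have "exp (-2) \<le> (4 / 9 :: real)" by (simp add: exp_minus field_simps)
  then have "exp (-2) * y\<^sup>2 \<le> 4 / 9 * y\<^sup>2" by (intro mult_right_mono) auto
  also have "\<dots> = (2 * y / 3)\<^sup>2" by (simp add: power2_eq_square)
  also note y_le
  finally have "exp (-2) * y\<^sup>2 \<le> (1 - u)\<^sup>2" .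
  moreover have "exp (-2) * (cmod (1 - z))\<^sup>2 \<le> u * (cmod (1 - z))\<^sup>2" using u by (intro mult_right_mono) auto
  ultimately show ?thesis
    using norm_one_minus_real_mult_unit_sq[OF z, of u] by (simp add: u_def distrib_left)
qed

lemma I_alpha_kernel_add_reflected:
  "I_alpha_kernel a z y + I_alpha_kernel a z (- y)
    = of_real (exp (- y * a) - exp (y * a)) / (1 - of_real (exp (-2 * y)) * z)
      + of_real (exp (y * a)) * (1 / (1 - of_real (exp (-2 * y)) * z)
      + of_real (exp (-2 * y)) / (of_real (exp (-2 * y)) - z))"
proof -
  define u where "u = exp (-2 * y)"
  have "exp (2 * y) * u = 1" by (simp add: u_def mult_exp_exp)
  then have "complex_of_real u * of_real (exp (2 * y)) = 1"
    by (metis mult.commute of_real_1 of_real_mult)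
  then have "1 - of_real (exp (2 * y)) * z = (of_real u - z) / of_real u"
    by (simp add: u_def field_simps)
  then have "I_alpha_kernel a z (- y) = of_real (exp (y * a)) * (of_real u / (of_real u - z))"
    unfolding I_alpha_kernel_def by simp
  then show ?thesis
    by (simp add: I_alpha_kernel_def u_def diff_divide_distrib distrib_left)
qed

lemma norm_exp_diff_div_le:
  fixes z :: complex
  assumes z: "cmod z = 1" and a: "0 \<le> a" "a \<le> 1" and y: "0 \<le> y"
  shows "cmod (of_real (exp (- y * a) - exp (y * a)) / (1 - of_real (exp (-2 * y)) * z)) \<le> exp y"
proof -
  define u where "u = exp (-2 * y)"
  define A where "A = 1 - of_real u * z"
  have A_ge: "1 - u \<le> cmod A"
    using abs_one_minus_le_norm_one_minus_real_mult_unit[OF z, of u] y by (simp add: A_def u_def)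
  have "0 \<le> y * a" "y * a \<le> y" using a y by (simp_all add: mult_left_le)
  then have "exp (- y * a) \<le> exp (y * a)" "exp (y * a) \<le> exp y" "exp (- y) \<le> exp (- y * a)"
    by simp_all
  then have "\<bar>exp (- y * a) - exp (y * a)\<bar> \<le> exp y - exp (- y)" by arith
  also have "\<dots> = exp y * (1 - u)" by (simp add: u_def algebra_simps mult_exp_exp)
  also have "\<dots> \<le> exp y * cmod A" using A_ge by simp
  finally have "cmod (of_real (exp (- y * a) - exp (y * a)) / A) \<le> exp y"
    by (cases "A = 0") (simp_all add: norm_divide divide_le_eq del: of_real_diff)
  then show ?thesis by (simp add: A_def u_def)
qed

lemma norm_I_alpha_kernel_sym_le_near_zero:
  fixes z :: complex
  assumes z: "cmod z = 1" "z \<noteq> 1" and a: "0 \<le> a" "a \<le> 1" and y: "0 \<le> y" "y \<le> 1"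
  shows "cmod (I_alpha_kernel a z y + I_alpha_kernel a z (- y))
    \<le> 2 * exp 1 + 2 * exp 1 ^ 3 * (cmod (1 - z) / (y\<^sup>2 + (cmod (1 - z))\<^sup>2))"
proof -
  define d where "d = cmod (1 - z)"
  define u where "u = exp (-2 * y)"
  define A where "A = 1 - of_real u * z"
  have u: "0 < u" "u \<le> 1" using y by (simp_all add: u_def)
  have d: "0 < d" using z by (simp add: d_def)
  have first: "cmod (of_real (exp (- y * a) - exp (y * a)) / A) \<le> exp 1"
    using norm_exp_diff_div_le[OF z(1) a y(1)] exp_le_cancel_iff[of y 1, THEN iffD2, OF y(2)]
    unfolding A_def u_def by linarith
  have second: "cmod (1 / A + of_real u / (of_real u - z)) \<le> 1 + exp 1 ^ 2 * (2 * d / (y\<^sup>2 + d\<^sup>2))"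
  proof -
    define D where "D = (1 - u)\<^sup>2 + u * d\<^sup>2"
    have D_ge: "exp (-2) * (y\<^sup>2 + d\<^sup>2) \<le> D"
      using norm_one_minus_exp_mult_unit_sq_ge[OF z(1) y] norm_one_minus_real_mult_unit_sq[OF z(1), of u]
      by (simp add: D_def d_def u_def)
    have pos: "0 < y\<^sup>2 + d\<^sup>2" using d by (simp add: add_nonneg_pos)
    have "2 * d / D \<le> 2 * d / (exp (-2) * (y\<^sup>2 + d\<^sup>2))"
      using D_ge d pos by (intro divide_left_mono) (auto intro!: mult_pos_pos order_less_le_trans[OF _ D_ge])
    also have "\<dots> = exp 1 ^ 2 * (2 * d / (y\<^sup>2 + d\<^sup>2))"
    proof -
      have "exp 1 ^ 2 = exp (2 :: real)" by (simp add: power2_eq_square mult_exp_exp)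
      then show ?thesis using pos by (simp add: exp_minus divide_inverse mult_ac)
    qed
    finally show ?thesis
      using norm_inverse_add_reflected_le[OF z u] by (simp add: A_def D_def d_def)
  qed
  have "cmod (of_real (exp (y * a)) * (1 / A + of_real u / (of_real u - z)))
      \<le> exp 1 * (1 + exp 1 ^ 2 * (2 * d / (y\<^sup>2 + d\<^sup>2)))"
    unfolding norm_mult norm_of_real using second a y
    by (intro mult_mono) (auto simp: mult_le_one)
  with first have "cmod (I_alpha_kernel a z y + I_alpha_kernel a z (- y))
      \<le> exp 1 + exp 1 * (1 + exp 1 ^ 2 * (2 * d / (y\<^sup>2 + d\<^sup>2)))"
    unfolding I_alpha_kernel_add_reflected A_def u_def by (intro norm_triangle_le add_mono)
  also have "\<dots> = 2 * exp 1 + 2 * exp 1 ^ 3 * (d / (y\<^sup>2 + d\<^sup>2))"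
    by (simp add: algebra_simps power3_eq_cube power2_eq_square)
  finally show ?thesis by (simp add: d_def)
qed

lemma norm_I_alpha_kernel_sym_le_far:
  fixes z :: complex
  assumes z: "cmod z = 1" and a: "a \<le> 1" and y: "1 \<le> y"
  shows "cmod (I_alpha_kernel a z y + I_alpha_kernel a z (- y)) \<le> 4 * exp (- a * y)"
proof -
  define U where "U = exp (2 * y)"
  have U: "3 \<le> U" using exp_ge_add_one_self[of "2 * y"] y unfolding U_def by linarith
  have "exp (-2 * y) = 1 / U" by (simp add: U_def exp_minus field_simps)
  then have "exp (-2 * y) \<le> 1 / 3" using U by (simp add: divide_le_eq)
  then have "1 / 2 \<le> cmod (1 - of_real (exp (-2 * y)) * z)"
    using abs_one_minus_le_norm_one_minus_real_mult_unit[OF z, of "exp (-2 * y)"] by simp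
  then have near: "cmod (I_alpha_kernel a z y) \<le> 2 * exp (- a * y)"
    by (simp add: I_alpha_kernel_def norm_divide divide_le_eq mult.commute)
  have "U / 2 \<le> cmod (1 - of_real U * z)"
    using abs_one_minus_le_norm_one_minus_real_mult_unit[OF z, of U] U by simp
  moreover have "0 < U / 2" using U by simp
  ultimately have "exp (y * a) / cmod (1 - of_real U * z) \<le> exp (y * a) / (U / 2)"
    by (intro divide_left_mono) (auto intro!: mult_pos_pos)
  then have "cmod (I_alpha_kernel a z (- y)) \<le> exp (y * a) / (U / 2)"
    by (simp add: I_alpha_kernel_def U_def norm_divide)
  also have "\<dots> = 2 * exp (y * a - 2 * y)" by (simp add: U_def exp_diff)
  also have "\<dots> \<le> 2 * exp (- a * y)" using a y by (simp add: algebra_simps mult_left_le)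
  finally show ?thesis using near by (intro norm_triangle_le) simp
qed

definition sym_majorant :: "real \<Rightarrow> real \<Rightarrow> real \<Rightarrow> real \<Rightarrow> real" where
  "sym_majorant a eps d y =
     indicator {-1..1} y * (2 * exp 1 ^ 2 + 2 * exp 1 ^ 4 * (d / (y\<^sup>2 + d\<^sup>2)))
     + 4 * exp ((eps - a) * \<bar>y\<bar>)"

lemma norm_I_alpha_kernel_sym_weighted_le:
  fixes z :: complex
  assumes z: "cmod z = 1" "z \<noteq> 1" and a: "0 \<le> a" "a \<le> 1" and eps: "0 \<le> eps" "eps \<le> 1"
  shows "cmod (I_alpha_kernel a z y + I_alpha_kernel a z (- y)) * exp (eps * \<bar>y\<bar>)
    \<le> sym_majorant a eps (cmod (1 - z)) y"
proof -
  define t where "t = \<bar>y\<bar>"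
  define d where "d = cmod (1 - z)"
  define S where "S = cmod (I_alpha_kernel a z t + I_alpha_kernel a z (- t))"
  have t: "0 \<le> t" by (simp add: t_def)
  have d: "0 < d" using z by (simp add: d_def)
  have "S * exp (eps * t) \<le> sym_majorant a eps d t"
  proof (cases "t \<le> 1")
    case True
    have "S \<le> 2 * exp 1 + 2 * exp 1 ^ 3 * (d / (t\<^sup>2 + d\<^sup>2))"
      using norm_I_alpha_kernel_sym_le_near_zero[OF z a t True] by (simp add: S_def d_def)
    moreover have "exp (eps * t) \<le> exp 1" using eps t True by (simp add: mult_le_one)
    ultimately have "S * exp (eps * t) \<le> (2 * exp 1 + 2 * exp 1 ^ 3 * (d / (t\<^sup>2 + d\<^sup>2))) * exp 1"
      using d by (intro mult_mono) (auto simp: S_def)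
    also have "\<dots> = 2 * exp 1 ^ 2 + 2 * exp 1 ^ 4 * (d / (t\<^sup>2 + d\<^sup>2))"
      by (simp add: algebra_simps power2_eq_square power3_eq_cube power4_eq_xxxx)
    finally have "S * exp (eps * t) \<le> 2 * exp 1 ^ 2 + 2 * exp 1 ^ 4 * (d / (t\<^sup>2 + d\<^sup>2))" .
    then show ?thesis
      unfolding sym_majorant_def using True t by (intro add_increasing2) simp_all
  next
    case False
    have "S \<le> 4 * exp (- a * t)"
      using norm_I_alpha_kernel_sym_le_far[OF z(1) a(2), of t] False by (simp add: S_def)
    then have "S * exp (eps * t) \<le> 4 * exp (- a * t) * exp (eps * t)" by (simp add: mult_right_mono)
    also have "\<dots> = 4 * exp ((eps - a) * t)" by (simp add: mult_exp_exp algebra_simps)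
    finally show ?thesis using False t by (simp add: sym_majorant_def)
  qed
  moreover have "cmod (I_alpha_kernel a z y + I_alpha_kernel a z (- y)) = S"
    by (cases "0 \<le> y") (simp_all add: S_def t_def add.commute)
  moreover have "sym_majorant a eps d y = sym_majorant a eps d t"
  proof -
    have "indicator {-1..1} y = (indicator {-1..1} t :: real)" by (auto simp: t_def indicator_def)
    then show ?thesis by (simp add: sym_majorant_def t_def)
  qed
  ultimately show ?thesis by (simp add: t_def d_def)
qed

lemma Poisson_kernel_on_Icc:
  fixes d s t :: real
  assumes d: "0 < d" and st: "s \<le> t"
  shows "integrable lborel (\<lambda>y. indicator {s..t} y * (d / (y\<^sup>2 + d\<^sup>2)))"
    and "(LINT y|lborel. indicator {s..t} y * (d / (y\<^sup>2 + d\<^sup>2))) \<le> pi"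
proof -
  have pos: "0 < y\<^sup>2 + d\<^sup>2" for y using d by (simp add: add_nonneg_pos)
  have cont: "continuous_on {s..t} (\<lambda>y. d / (y\<^sup>2 + d\<^sup>2))"
    by (intro continuous_intros) (metis pos order_less_irrefl)
  show "integrable lborel (\<lambda>y. indicator {s..t} y * (d / (y\<^sup>2 + d\<^sup>2)))"
    using borel_integrable_atLeastAtMost'[OF cont] by (simp add: set_integrable_def)
  have "(LINT y|lborel. indicator {s..t} y *\<^sub>R (d / (y\<^sup>2 + d\<^sup>2))) = arctan (t / d) - arctan (s / d)"
  proof (rule integral_FTC_atLeastAtMost[OF st _ cont])
    fix x :: real
    have "((\<lambda>y. arctan (y / d)) has_real_derivative inverse (1 + (x / d)\<^sup>2) * (1 / d)) (at x)"
      using d by (auto intro!: derivative_eq_intros)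
    moreover have "inverse (1 + (x / d)\<^sup>2) * (1 / d) = d / (x\<^sup>2 + d\<^sup>2)"
      using d by (simp add: field_simps power2_eq_square)
    ultimately show "((\<lambda>y. arctan (y / d)) has_vector_derivative d / (x\<^sup>2 + d\<^sup>2)) (at x within {s..t})"
      by (simp add: has_real_derivative_iff_has_vector_derivative has_vector_derivative_at_within)
  qed
  also have "\<dots> \<le> pi" using arctan_bounded[of "t / d"] arctan_bounded[of "s / d"] by linarith
  finally show "(LINT y|lborel. indicator {s..t} y * (d / (y\<^sup>2 + d\<^sup>2))) \<le> pi" by simp
qed

definition kernel_const :: "real \<Rightarrow> real \<Rightarrow> real" where
  "kernel_const a eps = 2 * exp 1 ^ 2 + pi * exp 1 ^ 4 + 2 * (LINT y|lborel. exp ((eps - a) * \<bar>y\<bar>))"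

lemma sym_majorant_integral:
  assumes d: "0 < d" and eps: "eps < a"
  shows "integrable lborel (sym_majorant a eps d)"
    and "integral\<^sup>L lborel (sym_majorant a eps d) \<le> 2 * kernel_const a eps"
proof -
  define P where "P = (\<lambda>y::real. indicator {-1..1} y * (d / (y\<^sup>2 + d\<^sup>2)))"
  define E where "E = (\<lambda>y::real. exp ((eps - a) * \<bar>y\<bar>))"
  have maj: "sym_majorant a eps d = (\<lambda>y. 2 * exp 1 ^ 2 * indicator {-1..1} y + 2 * exp 1 ^ 4 * P y + 4 * E y)"
    by (auto simp: sym_majorant_def P_def E_def algebra_simps)
  have I: "integrable lborel (indicator {-1..1} :: real \<Rightarrow> real)" by simp
  have P: "integrable lborel P" unfolding P_def by (rule Poisson_kernel_on_Icc(1)[OF d]) simp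
  have E: "integrable lborel E"
    using integrable_exp_neg_abs[of "a - eps"] eps unfolding E_def by (simp add: algebra_simps)
  show "integrable lborel (sym_majorant a eps d)" unfolding maj using I P E by simp
  have "integral\<^sup>L lborel (sym_majorant a eps d)
      = 2 * exp 1 ^ 2 * 2 + 2 * exp 1 ^ 4 * integral\<^sup>L lborel P + 4 * integral\<^sup>L lborel E"
    unfolding maj using I P E by simp
  also have "\<dots> \<le> 2 * exp 1 ^ 2 * 2 + 2 * exp 1 ^ 4 * pi + 4 * integral\<^sup>L lborel E"
    using Poisson_kernel_on_Icc(2)[OF d, of "-1" 1] unfolding P_def by simp
  also have "\<dots> = 2 * kernel_const a eps" by (simp add: kernel_const_def E_def)
  finally show "integral\<^sup>L lborel (sym_majorant a eps d) \<le> 2 * kernel_const a eps" .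
qed

lemma lborel_integral_symmetrize:
  fixes g :: "real \<Rightarrow> 'a::{real_normed_field, banach, second_countable_topology}"
  assumes g: "integrable lborel g"
  shows "integrable lborel (\<lambda>y. (g y + g (- y)) / 2)"
    and "(LINT y|lborel. g y) = (LINT y|lborel. (g y + g (- y)) / 2)"
proof -
  have g_neg: "integrable lborel (\<lambda>y. g (- y))"
    using lborel_integrable_real_affine[OF g, of "-1" 0] by simp
  then show "integrable lborel (\<lambda>y. (g y + g (- y)) / 2)" using g by simp
  have "(LINT y|lborel. g (- y)) = (LINT y|lborel. g y)"
    using lborel_integral_real_affine[of "-1" g 0] by simp
  then show "(LINT y|lborel. g y) = (LINT y|lborel. (g y + g (- y)) / 2)"
    using g g_neg by (simp add: integral_add)
qed

lemma norm_integral_even_mult_I_alpha_kernel_le: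
  assumes a: "0 \<le> a" "a \<le> 1" and eps: "0 \<le> eps" "eps < a" and z: "cmod z = 1" "z \<noteq> 1"
    and k_meas: "k \<in> borel_measurable borel" and k_even: "\<And>y. k (- y) = k y"
    and k_bound: "\<And>y. cmod (k y) \<le> M * exp (eps * \<bar>y\<bar>)"
  shows "cmod (LINT y|lborel. k y * I_alpha_kernel a z y) \<le> M * kernel_const a eps"
proof -
  define g where "g y = k y * I_alpha_kernel a z y" for y
  define d where "d = cmod (1 - z)"
  have d: "0 < d" using z by (simp add: d_def)
  have "cmod (k 0) \<le> M" using k_bound[of 0] by simp
  then have M: "0 \<le> M" using norm_ge_zero[of "k 0"] by linarith
  have g: "integrable lborel g"
    unfolding g_def using integrable_mult_I_alpha_kernel[OF a(2) eps(2) z k_meas k_bound] .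
  have pointwise: "norm ((g y + g (- y)) / 2) \<le> M / 2 * sym_majorant a eps d y" for y
  proof -
    have "norm ((g y + g (- y)) / 2) = cmod (k y) * cmod (I_alpha_kernel a z y + I_alpha_kernel a z (- y)) / 2"
      by (simp add: g_def k_even norm_mult flip: distrib_left)
    also have "\<dots> \<le> M * exp (eps * \<bar>y\<bar>) * cmod (I_alpha_kernel a z y + I_alpha_kernel a z (- y)) / 2"
      using k_bound[of y] by (intro divide_right_mono mult_right_mono) auto
    also have "\<dots> = M / 2 * (cmod (I_alpha_kernel a z y + I_alpha_kernel a z (- y)) * exp (eps * \<bar>y\<bar>))"
      by simp
    also have "\<dots> \<le> M / 2 * sym_majorant a eps d y"
      using norm_I_alpha_kernel_sym_weighted_le[OF z a eps(1)] eps a M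
      by (intro mult_left_mono) (auto simp: d_def)
    finally show ?thesis .
  qed
  have "norm (LINT y|lborel. (g y + g (- y)) / 2) \<le> (LINT y|lborel. M / 2 * sym_majorant a eps d y)"
    using sym_majorant_integral(1)[OF d eps(2)]
    by (intro Bochner_Integration.integral_norm_bound_integral[OF lborel_integral_symmetrize(1)[OF g] _ pointwise]) simp
  also have "\<dots> = M / 2 * integral\<^sup>L lborel (sym_majorant a eps d)" by simp
  also have "\<dots> \<le> M / 2 * (2 * kernel_const a eps)"
    using sym_majorant_integral(2)[OF d eps(2)] M by (intro mult_left_mono) auto
  finally have "norm (LINT y|lborel. g y) \<le> M / 2 * (2 * kernel_const a eps)"
    unfolding lborel_integral_symmetrize(2)[OF g] .
  then show ?thesis by (simp add: g_def)
qed

lemma norm_iexp_minus_one_le_powr: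
  fixes x eps :: real
  assumes x: "0 \<le> x" and eps: "0 \<le> eps" "eps \<le> 1"
  shows "cmod (exp (\<i> * complex_of_real x) - 1) \<le> 2 * x powr eps"
proof (cases "x \<le> 1")
  case True
  have "cmod (exp (\<i> * complex_of_real x) - 1) \<le> x"
    using iexp_approx1[of x 0] x by simp
  also have "\<dots> = x powr 1" using x by simp
  also have "\<dots> \<le> x powr eps"
  proof (cases "x = 0")
    case False
    then show ?thesis using x True eps by (intro powr_mono') auto
  qed simp
  finally show ?thesis using powr_ge_zero[of x eps] by linarith
next
  case False
  have "cmod (exp (\<i> * complex_of_real x) - 1) \<le> 2"
    using norm_triangle_ineq4[of "exp (\<i> * complex_of_real x)" 1] by simp
  also have "\<dots> \<le> 2 * x powr eps" using False eps by (simp add: ge_one_powr_ge_zero)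
  finally show ?thesis .
qed

lemma cosh_le_exp_abs: "cosh x \<le> exp \<bar>x\<bar>" for x :: real
  by (cases "0 \<le> x") (auto simp: cosh_def)

lemma norm_iexp_cosh_minus_one_le:
  fixes rho eps y :: real
  assumes rho: "0 \<le> rho" and eps: "0 \<le> eps" "eps \<le> 1"
  shows "cmod (exp (\<i> * complex_of_real (rho * cosh y)) - 1) \<le> 2 * rho powr eps * exp (eps * \<bar>y\<bar>)"
proof -
  have cosh: "0 < cosh y" by simp
  have "cmod (exp (\<i> * complex_of_real (rho * cosh y)) - 1) \<le> 2 * (rho * cosh y) powr eps"
    using norm_iexp_minus_one_le_powr[OF _ eps, of "rho * cosh y"] rho by simp
  also have "(rho * cosh y) powr eps = rho powr eps * cosh y powr eps"
    using rho cosh by (simp add: powr_mult)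
  also have "cosh y powr eps \<le> exp \<bar>y\<bar> powr eps"
    using cosh eps by (intro powr_mono2 cosh_le_exp_abs) auto
  also have "exp \<bar>y\<bar> powr eps = exp (eps * \<bar>y\<bar>)" by (simp add: powr_def mult.commute)
  finally show ?thesis by (simp add: mult_left_mono mult.assoc)
qed

lemma borel_measurable_iexp_cosh:
  "(\<lambda>y. exp (\<i> * complex_of_real (rho * cosh y))) \<in> borel_measurable borel"
  by (intro borel_measurable_continuous_onI continuous_intros)

lemma norm_I_alpha_le:
  assumes "0 < a" "a \<le> 1" and chi: "\<forall>k::int. chi \<noteq> pi * of_int k"
  shows "cmod (I_alpha a rho chi) \<le> kernel_const a 0"
  using norm_integral_even_mult_I_alpha_kernel_le[where eps = 0 and M = 1,
      OF _ _ _ _ exp_chi_on_unit_circle[OF chi] borel_measurable_iexp_cosh] assms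
  by (simp add: I_alpha_eq_kernel)

lemma norm_I_alpha_minus_I_alpha_zero_le:
  assumes a: "0 \<le> a" "a \<le> 1" and eps: "0 \<le> eps" "eps < a" and rho: "0 \<le> rho"
    and chi: "\<forall>k::int. chi \<noteq> pi * of_int k"
  shows "cmod (I_alpha a rho chi - I_alpha a 0 chi) \<le> 2 * kernel_const a eps * rho powr eps"
proof -
  let ?z = "exp (- (2 * \<i> * complex_of_real chi))"
  let ?k = "\<lambda>r y. exp (\<i> * complex_of_real (r * cosh y))"
  note z = exp_chi_on_unit_circle[OF chi]
  have int: "integrable lborel (\<lambda>y. ?k r y * I_alpha_kernel a ?z y)" for r
    using z a eps
    by (intro integrable_mult_I_alpha_kernel[where eps = 0 and M = 1] borel_measurable_iexp_cosh) auto
  have "I_alpha a rho chi - I_alpha a 0 chi = (LINT y|lborel. (?k rho y - 1) * I_alpha_kernel a ?z y)"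
    using Bochner_Integration.integral_diff[OF int[of rho] int[of 0]]
    by (simp add: I_alpha_eq_kernel left_diff_distrib)
  also have "cmod \<dots> \<le> 2 * rho powr eps * kernel_const a eps"
    using norm_iexp_cosh_minus_one_le[OF rho eps(1)] eps a borel_measurable_iexp_cosh[of rho]
    by (intro norm_integral_even_mult_I_alpha_kernel_le[OF a eps z]) auto
  finally show ?thesis by (simp add: mult_ac)
qed

theorem lemma2:
  fixes a :: real
  assumes "0 < a" and "a < 1"
  shows "(\<exists>C. \<forall>rho chi. rho \<ge> 0 \<and> (\<forall>k::int. chi \<noteq> pi * of_int k)
            \<longrightarrow> cmod (I_alpha a rho chi) \<le> C)
       \<and> (\<forall>eps. 0 \<le> eps \<and> eps < min a (1 - a) \<longrightarrow>
            (\<exists>C. \<forall>rho chi. rho \<ge> 0 \<and> (\<forall>k::int. chi \<noteq> pi * of_int k)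
               \<longrightarrow> cmod (I_alpha a rho chi - I_alpha a 0 chi) \<le> C * rho powr eps))"
proof (intro conjI allI impI)
  show "\<exists>C. \<forall>rho chi. rho \<ge> 0 \<and> (\<forall>k::int. chi \<noteq> pi * of_int k) \<longrightarrow> cmod (I_alpha a rho chi) \<le> C"
    using norm_I_alpha_le assms by fastforce
  fix eps :: real
  assume "0 \<le> eps \<and> eps < min a (1 - a)"
  then show "\<exists>C. \<forall>rho chi. rho \<ge> 0 \<and> (\<forall>k::int. chi \<noteq> pi * of_int k)
      \<longrightarrow> cmod (I_alpha a rho chi - I_alpha a 0 chi) \<le> C * rho powr eps"
    using norm_I_alpha_minus_I_alpha_zero_le[of a eps] assms by fastforce
qed

end
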